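(* Let $a<b$, $\gamma>0$, $k\in\{1,2,3\}$ and $\phi\in\mathcal{C}^{k+1}[a,b]$. Define, using the operators of the context, \[ \phi_{1,1}=\phi,\quad \phi_{1,2}(x)=\mathcal{D}_L^{\,\phi'(a)/\gamma}[\phi_{1,1},\gamma](x)-\sum_{m=2}^{k}\left(-\frac1\gamma\right)^m\partial_x^m\phi(a)\,e^{-\gamma(x-a)}, \] \[ \phi_{1,3}(x)=\mathcal{D}_L^{\,0}[\phi_{1,2},\gamma](x)+\sum_{m=2}^{k}(m-1)\left(-\frac1\gamma\right)^m\partial_x^m\phi(a)\,e^{-\gamma(x-a)}, \] \[ \phi_{2,1}=\phi,\quad \phi_{2,2}(x)=\mathcal{D}_R^{\,-\phi'(b)/\gamma}[\phi_{2,1},\gamma](x)-\sum_{m=2}^{k}\left(\frac1\gamma\right)^m\partial_x^m\phi(b)\,e^{-\gamma(b-x)}, \] \[ \phi_{2,3}(x)=\mathcal{D}_R^{\,0}[\phi_{2,2},\gamma](x)+\sum_{m=2}^{k}(m-1)\left(\frac1\gamma\right)^m\partial_x^m\phi(b)\,e^{-\gamma(b-x)}, \] and the modified partial sums \[ \widetilde{\mathcal{P}}^L_k[\phi,\gamma]=\gamma\,\mathcal{D}_L^{\,\phi'(a)/\gamma}[\phi_{1,1},\gamma]+\gamma\sum_{p=2}^{k}\mathcal{D}_L^{\,0}[\phi_{1,p},\gamma]\ \ (k=1,2),\qquad \widetilde{\mathcal{P}}^L_3[\phi,\gamma]=\gamma\,\mathcal{D}_L^{\,\phi'(a)/\gamma}[\phi_{1,1},\gamma]+\gamma\sum_{p=2}^{3}\mathcal{D}_L^{\,0}[\phi_{1,p},\gamma]-\gamma\,\mathcal{D}_0^{\,0,0}[\phi_{1,3},\gamma],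 \] \[ \widetilde{\mathcal{P}}^R_k[\phi,\gamma]=-\gamma\,\mathcal{D}_R^{\,-\phi'(b)/\gamma}[\phi_{2,1},\gamma]-\gamma\sum_{p=2}^{k}\mathcal{D}_R^{\,0}[\phi_{2,p},\gamma]\ \ (k=1,2),\qquad \widetilde{\mathcal{P}}^R_3[\phi,\gamma]=-\gamma\,\mathcal{D}_R^{\,-\phi'(b)/\gamma}[\phi_{2,1},\gamma]-\gamma\sum_{p=2}^{3}\mathcal{D}_R^{\,0}[\phi_{2,p},\gamma]+\gamma\,\mathcal{D}_0^{\,0,0}[\phi_{2,3},\gamma]. \] Then there is a constant $C>0$, independent of $\gamma$ and $\phi$, such that \[ \|\partial_x\phi-\widetilde{\mathcal{P}}^L_k[\phi,\gamma]\|_{\infty}\le C\left(\frac1\gamma\right)^k\|\partial_x^{k+1}\phi\|_\infty,\qquad \|\partial_x\phi-\widetilde{\mathcal{P}}^R_k[\phi,\gamma]\|_{\infty}\le C\left(\frac1\gamma\right)^k\|\partial_x^{k+1}\phi\|_\infty, \] where $\|\cdot\|_\infty$ is the supremum norm on $[a,b]$.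
   Context: Fix $a<b$, $\gamma>0$, $\mu=e^{-\gamma(b-a)}$. For continuous $v$ on $[a,b]$ let $I^{L}[v,\gamma](x)=\gamma\int_a^x e^{-\gamma(x-y)}v(y)\,dy$, $I^{R}[v,\gamma](x)=\gamma\int_x^b e^{-\gamma(y-x)}v(y)\,dy$, $I^{0}[v,\gamma](x)=\frac{\gamma}{2}\int_a^b e^{-\gamma|x-y|}v(y)\,dy$. For a real number $c$: $\mathcal{D}_L^{\,c}[v,\gamma](x)=v(x)-I^L[v,\gamma](x)-(v(a)-c)e^{-\gamma(x-a)}$ (the unique operator of this form with value $c$ at $x=a$); $\mathcal{D}_R^{\,c}[v,\gamma](x)=v(x)-I^R[v,\gamma](x)-(v(b)-c)e^{-\gamma(b-x)}$ (value $c$ at $x=b$). For real numbers $c_a,c_b$: $\mathcal{D}_0^{\,c_a,c_b}[v,\gamma](x)=v(x)-I^0[v,\gamma](x)-A_0e^{-\gamma(x-a)}-B_0e^{-\gamma(b-x)}$ with $A_0=\frac{1}{1-\mu^2}\big(\mu(I^0[v,\gamma](b)-v(b)+c_b)-(I^0[v,\gamma](a)-v(a)+c_a)\big)$, $B_0=\frac{1}{1-\mu^2}\big(\mu(I^0[v,\gamma](a)-v(a)+c_a)-(I^0[v,\gamma](b)-v(b)+c_b)\big)$, so that its values at $a$ and $b$ are $c_a$ and $c_b$. Derivatives at endpoints are one-sided; $\phi'=\partial_x\phi$. *)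

theory Defs
  imports "HOL-Analysis.Analysis"
begin

definition IL :: "real \<Rightarrow> real \<Rightarrow> (real \<Rightarrow> real) \<Rightarrow> real \<Rightarrow> real" where
  "IL a \<gamma> v x = \<gamma> * integral {a..x} (\<lambda>y. exp (-\<gamma>*(x-y)) * v y)"

definition IR :: "real \<Rightarrow> real \<Rightarrow> (real \<Rightarrow> real) \<Rightarrow> real \<Rightarrow> real" where
  "IR b \<gamma> v x = \<gamma> * integral {x..b} (\<lambda>y. exp (-\<gamma>*(y-x)) * v y)"

definition I0 :: "real \<Rightarrow> real \<Rightarrow> real \<Rightarrow> (real \<Rightarrow> real) \<Rightarrow> real \<Rightarrow> real" where
  "I0 a b \<gamma> v x = \<gamma>/2 * integral {a..b} (\<lambda>y. exp (-\<gamma>*\<bar>x-y\<bar>) * v y)"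

definition DL :: "real \<Rightarrow> real \<Rightarrow> real \<Rightarrow> (real \<Rightarrow> real) \<Rightarrow> real \<Rightarrow> real" where
  "DL a \<gamma> c v x = v x - IL a \<gamma> v x - (v a - c) * exp (-\<gamma>*(x-a))"

definition DR :: "real \<Rightarrow> real \<Rightarrow> real \<Rightarrow> (real \<Rightarrow> real) \<Rightarrow> real \<Rightarrow> real" where
  "DR b \<gamma> c v x = v x - IR b \<gamma> v x - (v b - c) * exp (-\<gamma>*(b-x))"

definition D0 :: "real \<Rightarrow> real \<Rightarrow> real \<Rightarrow> real \<Rightarrow> real \<Rightarrow> (real \<Rightarrow> real) \<Rightarrow> real \<Rightarrow> real" where
  "D0 a b \<gamma> ca cb v x =
     (let \<mu> = exp (-\<gamma>*(b-a));
          A0 = (\<mu> * (I0 a b \<gamma> v b - v b + cb) - (I0 a b \<gamma> v a - v a + ca)) / (1 - \<mu>^2);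
          B0 = (\<mu> * (I0 a b \<gamma> v a - v a + ca) - (I0 a b \<gamma> v b - v b + cb)) / (1 - \<mu>^2)
      in v x - I0 a b \<gamma> v x - A0 * exp (-\<gamma>*(x-a)) - B0 * exp (-\<gamma>*(b-x)))"

(* d j = j-th derivative of phi = d 0 on [a,b] (one-sided at endpoints);
   phi in C^n[a,b] means derivatives up to order n exist and the n-th is continuous *)
definition Cn_family :: "real \<Rightarrow> real \<Rightarrow> nat \<Rightarrow> (nat \<Rightarrow> real \<Rightarrow> real) \<Rightarrow> bool" where
  "Cn_family a b n d \<longleftrightarrow>
     (\<forall>j<n. \<forall>x\<in>{a..b}. (d j has_real_derivative d (Suc j) x) (at x within {a..b})) \<and>
     continuous_on {a..b} (d n)"

definition phiL :: "real \<Rightarrow> real \<Rightarrow> nat \<Rightarrow> (nat \<Rightarrow> real \<Rightarrow> real) \<Rightarrow> nat \<Rightarrow> real \<Rightarrow> real" where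
  "phiL a \<gamma> k d p =
     (if p = 1 then d 0
      else if p = 2 then (\<lambda>x. DL a \<gamma> (d 1 a / \<gamma>) (d 0) x
              - (\<Sum>m=2..k. (-1/\<gamma>)^m * d m a * exp (-\<gamma>*(x-a))))
      else (\<lambda>x. DL a \<gamma> 0 (\<lambda>y. DL a \<gamma> (d 1 a / \<gamma>) (d 0) y
                  - (\<Sum>m=2..k. (-1/\<gamma>)^m * d m a * exp (-\<gamma>*(y-a)))) x
              + (\<Sum>m=2..k. (real m - 1) * (-1/\<gamma>)^m * d m a * exp (-\<gamma>*(x-a)))))"

definition phiR :: "real \<Rightarrow> real \<Rightarrow> nat \<Rightarrow> (nat \<Rightarrow> real \<Rightarrow> real) \<Rightarrow> nat \<Rightarrow> real \<Rightarrow> real" where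
  "phiR b \<gamma> k d p =
     (if p = 1 then d 0
      else if p = 2 then (\<lambda>x. DR b \<gamma> (- d 1 b / \<gamma>) (d 0) x
              - (\<Sum>m=2..k. (1/\<gamma>)^m * d m b * exp (-\<gamma>*(b-x))))
      else (\<lambda>x. DR b \<gamma> 0 (\<lambda>y. DR b \<gamma> (- d 1 b / \<gamma>) (d 0) y
                  - (\<Sum>m=2..k. (1/\<gamma>)^m * d m b * exp (-\<gamma>*(b-y)))) x
              + (\<Sum>m=2..k. (real m - 1) * (1/\<gamma>)^m * d m b * exp (-\<gamma>*(b-x)))))"

definition PL :: "real \<Rightarrow> real \<Rightarrow> real \<Rightarrow> nat \<Rightarrow> (nat \<Rightarrow> real \<Rightarrow> real) \<Rightarrow> real \<Rightarrow> real" where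
  "PL a b \<gamma> k d x =
     \<gamma> * DL a \<gamma> (d 1 a / \<gamma>) (phiL a \<gamma> k d 1) x
     + \<gamma> * (\<Sum>p=2..k. DL a \<gamma> 0 (phiL a \<gamma> k d p) x)
     - (if k = 3 then \<gamma> * D0 a b \<gamma> 0 0 (phiL a \<gamma> k d 3) x else 0)"

definition PR :: "real \<Rightarrow> real \<Rightarrow> real \<Rightarrow> nat \<Rightarrow> (nat \<Rightarrow> real \<Rightarrow> real) \<Rightarrow> real \<Rightarrow> real" where
  "PR a b \<gamma> k d x =
     - \<gamma> * DR b \<gamma> (- d 1 b / \<gamma>) (phiR b \<gamma> k d 1) x
     - \<gamma> * (\<Sum>p=2..k. DR b \<gamma> 0 (phiR b \<gamma> k d p) x)
     + (if k = 3 then \<gamma> * D0 a b \<gamma> 0 0 (phiR b \<gamma> k d 3) x else 0)"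

end

theory Submission
  imports Defs
begin

(*
  Write J for IL a \<gamma> and e for the exponential exp (-\<gamma>*(x-a)). J is a contraction for the
  sup norm, and integration by parts gives J w = w - w(a) e - J w'/\<gamma>. Consequently
  \<gamma> D_L^c[v] = J v' + \<gamma> c e for C^1 data, while (D_L^c[v])' = v' - \<gamma> D_L^c[v]. Computing the
  derivatives of \<phi>_{1,2} and \<phi>_{1,3} with these two rules, the modified partial sums
  telescope: \<phi>' - P^L_k equals J^k \<phi>^(k+1) / \<gamma>^k for k = 1, 2, and
  J^3 \<phi>^(4) / \<gamma>^3 + \<gamma> D_0[\<phi>_{1,3}] for k = 3, where \<phi>_{1,3}'' = J^2 \<phi>^(4) / \<gamma>^2.
  For C^2 data, v - I_0 v differs from -I_0 v''/\<gamma>^2 only by a combination of the two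
  boundary exponentials, which D_0^{0,0} removes; hence |D_0[v]| <= 2 |v''|_oo / \<gamma>^2.
  Altogether the constant C = 3 works. The statement for P^R follows from the one for P^L
  by the reflection x |-> a + b - x, which exchanges IL with IR and D_L with D_R.
*)

section \<open>The one-sided convolution IL and the operator D_L\<close>

lemma IL_integrable:
  fixes u :: "real \<Rightarrow> real"
  assumes "continuous_on {a..b} u" and "x \<in> {a..b}"
  shows "(\<lambda>y. exp (-\<gamma>*(x-y)) * u y) integrable_on {a..x}"
proof (rule integrable_continuous_interval)
  have "continuous_on {a..x} u"
    using assms by (elim continuous_on_subset) auto
  then show "continuous_on {a..x} (\<lambda>y. exp (-\<gamma>*(x-y)) * u y)"
    by (intro continuous_intros)
qed

lemma IL_left_endpoint [simp]: "IL a \<gamma> u a = 0"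
  by (simp add: IL_def)

lemma IL_minus: "IL a \<gamma> (\<lambda>y. - u y) x = - IL a \<gamma> u x"
  by (simp add: IL_def)

lemma IL_linear:
  assumes "continuous_on {a..b} u" and "continuous_on {a..b} v" and "x \<in> {a..b}"
  shows "IL a \<gamma> (\<lambda>y. p * u y + q * v y) x = p * IL a \<gamma> u x + q * IL a \<gamma> v x"
proof -
  have "integral {a..x} (\<lambda>y. exp (-\<gamma>*(x-y)) * (p * u y + q * v y))
      = integral {a..x} (\<lambda>y. p * (exp (-\<gamma>*(x-y)) * u y) + q * (exp (-\<gamma>*(x-y)) * v y))"
    by (simp add: algebra_simps)
  also have "\<dots> = p * integral {a..x} (\<lambda>y. exp (-\<gamma>*(x-y)) * u y)
      + q * integral {a..x} (\<lambda>y. exp (-\<gamma>*(x-y)) * v y)"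
    using IL_integrable[OF assms(1,3)] IL_integrable[OF assms(2,3)]
    by (simp add: integral_add integrable_on_mult_right)
  finally show ?thesis
    unfolding IL_def by (simp add: algebra_simps)
qed

lemma IL_linear3:
  assumes "continuous_on {a..b} u" and "continuous_on {a..b} v" and "continuous_on {a..b} w"
    and "x \<in> {a..b}"
  shows "IL a \<gamma> (\<lambda>y. p * u y + q * v y + r * w y) x
    = p * IL a \<gamma> u x + q * IL a \<gamma> v x + r * IL a \<gamma> w x"
  using IL_linear[of a b "\<lambda>y. p * u y + q * v y" w x \<gamma> 1 r] IL_linear[of a b u v x \<gamma> p q] assms
  by (simp add: continuous_intros)

lemma IL_has_derivative:
  fixes u :: "real \<Rightarrow> real"
  assumes u: "continuous_on {a..b} u" and x: "x \<in> {a..b}"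
  shows "(IL a \<gamma> u has_real_derivative \<gamma> * (u x - IL a \<gamma> u x)) (at x within {a..b})"
proof -
  have IL_eq: "IL a \<gamma> u = (\<lambda>x. \<gamma> * exp (-\<gamma>*x) * integral {a..x} (\<lambda>y. exp (\<gamma>*y) * u y))"
  proof
    fix x
    have "integral {a..x} (\<lambda>y. exp (-\<gamma>*(x-y)) * u y)
        = integral {a..x} (\<lambda>y. exp (-\<gamma>*x) * (exp (\<gamma>*y) * u y))"
      by (simp add: algebra_simps flip: exp_add)
    then show "IL a \<gamma> u x = \<gamma> * exp (-\<gamma>*x) * integral {a..x} (\<lambda>y. exp (\<gamma>*y) * u y)"
      unfolding IL_def by simp
  qed
  have "continuous_on {a..b} (\<lambda>y. exp (\<gamma>*y) * u y)"
    by (intro continuous_intros u)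
  from integral_has_real_derivative[OF this x]
  have "((\<lambda>x. \<gamma> * exp (-\<gamma>*x) * integral {a..x} (\<lambda>y. exp (\<gamma>*y) * u y)) has_real_derivative
      \<gamma> * (exp (-\<gamma>*x) * (-\<gamma>)) * integral {a..x} (\<lambda>y. exp (\<gamma>*y) * u y)
      + \<gamma> * exp (-\<gamma>*x) * (exp (\<gamma>*x) * u x)) (at x within {a..b})"
    by (auto intro!: derivative_eq_intros)
  then show ?thesis
    unfolding IL_eq by (rule DERIV_cong) (simp add: algebra_simps flip: exp_add)
qed

lemma continuous_on_IL: "continuous_on {a..b} u \<Longrightarrow> continuous_on {a..b} (IL a \<gamma> u)"
  using IL_has_derivative by (rule DERIV_continuous_on)

lemma IL_by_parts:
  fixes w w' :: "real \<Rightarrow> real"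
  assumes \<gamma>: "\<gamma> > 0"
    and w: "\<And>y. y \<in> {a..b} \<Longrightarrow> (w has_real_derivative w' y) (at y within {a..b})"
    and w': "continuous_on {a..b} w'" and x: "x \<in> {a..b}"
  shows "IL a \<gamma> w x = w x - w a * exp (-\<gamma>*(x-a)) - IL a \<gamma> w' x / \<gamma>"
proof -
  define F where "F y = exp (-\<gamma>*(x-y)) * w y" for y
  define f where "f y = \<gamma> * (exp (-\<gamma>*(x-y)) * w y) + exp (-\<gamma>*(x-y)) * w' y" for y
  have "(F has_vector_derivative f y) (at y within {a..x})" if y: "y \<in> {a..x}" for y
  proof -
    have "(w has_real_derivative w' y) (at y within {a..x})"
      using DERIV_subset[OF w] x y by auto
    then have "(F has_real_derivative f y) (at y within {a..x})"
      unfolding F_def f_def by (auto intro!: derivative_eq_intros simp: algebra_simps)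
    then show ?thesis
      by (simp add: has_real_derivative_iff_has_vector_derivative)
  qed
  then have "(f has_integral F x - F a) {a..x}"
    using x by (intro fundamental_theorem_of_calculus) auto
  moreover have "(f has_integral \<gamma> * integral {a..x} (\<lambda>y. exp (-\<gamma>*(x-y)) * w y)
      + integral {a..x} (\<lambda>y. exp (-\<gamma>*(x-y)) * w' y)) {a..x}"
    unfolding f_def using DERIV_continuous_on[OF w] w' x
    by (intro has_integral_add has_integral_mult_right integrable_integral IL_integrable)
  ultimately have "IL a \<gamma> w x + IL a \<gamma> w' x / \<gamma> = F x - F a"
    unfolding IL_def using \<gamma> by (auto dest: has_integral_unique)
  then show ?thesis
    unfolding F_def by (simp add: algebra_simps)
qed

lemma IL_const:
  assumes "\<gamma> > 0" and "a \<le> x"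
  shows "IL a \<gamma> (\<lambda>_. M) x = M * (1 - exp (-\<gamma>*(x-a)))"
  using IL_by_parts[of \<gamma> a x "\<lambda>_. M" "\<lambda>_. 0" x] assms
  by (simp add: IL_def algebra_simps)

lemma abs_IL_le_weighted:
  fixes u :: "real \<Rightarrow> real"
  assumes \<gamma>: "\<gamma> > 0" and u: "continuous_on {a..b} u"
    and M: "\<And>y. y \<in> {a..b} \<Longrightarrow> \<bar>u y\<bar> \<le> M" and x: "x \<in> {a..b}"
  shows "\<bar>IL a \<gamma> u x\<bar> \<le> M * (1 - exp (-\<gamma>*(x-a)))"
proof -
  have "norm (integral {a..x} (\<lambda>y. exp (-\<gamma>*(x-y)) * u y))
      \<le> integral {a..x} (\<lambda>y. exp (-\<gamma>*(x-y)) * M)"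
    using M x
    by (intro integral_norm_bound_integral IL_integrable[OF u x]
        IL_integrable[of a b "\<lambda>_. M"]) (auto simp: abs_mult intro!: mult_left_mono)
  then have "\<bar>IL a \<gamma> u x\<bar> \<le> IL a \<gamma> (\<lambda>_. M) x"
    unfolding IL_def using \<gamma> by (simp add: abs_mult)
  then show ?thesis
    using IL_const[OF \<gamma>] x by simp
qed

lemma abs_IL_le:
  fixes u :: "real \<Rightarrow> real"
  assumes "\<gamma> > 0" and "continuous_on {a..b} u"
    and M: "\<And>y. y \<in> {a..b} \<Longrightarrow> \<bar>u y\<bar> \<le> M" and x: "x \<in> {a..b}"
  shows "\<bar>IL a \<gamma> u x\<bar> \<le> M"
proof -
  have "0 \<le> M"
    using M[of a] x by auto
  then have "M * (1 - exp (-\<gamma>*(x-a))) \<le> M"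
    by (simp add: algebra_simps)
  then show ?thesis
    using abs_IL_le_weighted[OF assms] by linarith
qed

lemma DL_has_derivative:
  assumes v: "\<And>y. y \<in> {a..b} \<Longrightarrow> (v has_real_derivative v' y) (at y within {a..b})"
    and x: "x \<in> {a..b}"
  shows "(DL a \<gamma> c v has_real_derivative v' x - \<gamma> * DL a \<gamma> c v x) (at x within {a..b})"
proof -
  have DL_eq: "DL a \<gamma> c v = (\<lambda>x. v x - IL a \<gamma> v x - (v a - c) * exp (-\<gamma>*(x-a)))"
    by (simp add: fun_eq_iff DL_def)
  have "continuous_on {a..b} v"
    using v by (rule DERIV_continuous_on)
  then show ?thesis
    unfolding DL_eq
    by (auto intro!: derivative_eq_intros IL_has_derivative v x simp: algebra_simps)
qed

lemma DL_eq_IL: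
  assumes \<gamma>: "\<gamma> > 0"
    and v: "\<And>y. y \<in> {a..b} \<Longrightarrow> (v has_real_derivative v' y) (at y within {a..b})"
    and v': "continuous_on {a..b} v'" and x: "x \<in> {a..b}"
  shows "\<gamma> * DL a \<gamma> c v x = IL a \<gamma> v' x + \<gamma> * c * exp (-\<gamma>*(x-a))"
  using IL_by_parts[OF assms] \<gamma> by (simp add: DL_def field_simps)

lemma Cn_familyD:
  assumes "Cn_family a b n d" and "j < n" and "y \<in> {a..b}"
  shows "(d j has_real_derivative d (Suc j) y) (at y within {a..b})"
  using assms unfolding Cn_family_def by blast

lemma Cn_family_continuous:
  assumes "Cn_family a b n d" and "j \<le> n"
  shows "continuous_on {a..b} (d j)"
proof (cases "j < n")
  case True
  show ?thesis
    by (rule DERIV_continuous_on[OF Cn_familyD[OF assms(1) True]])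
next
  case False
  with assms show ?thesis
    unfolding Cn_family_def by (simp add: not_less)
qed

lemma Cn_family_mono:
  assumes "Cn_family a b n d" and "m \<le> n"
  shows "Cn_family a b m d"
  using assms Cn_family_continuous[OF assms] unfolding Cn_family_def by auto

lemma Cn_family_IL_by_parts:
  assumes "\<gamma> > 0" and "Cn_family a b n d" and "j < n" and "x \<in> {a..b}"
  shows "IL a \<gamma> (d j) x = d j x - d j a * exp (-\<gamma>*(x-a)) - IL a \<gamma> (d (Suc j)) x / \<gamma>"
  using IL_by_parts[OF assms(1) Cn_familyD[OF assms(2,3)] Cn_family_continuous[OF assms(2)] assms(4)]
    assms(3) by simp

lemma phiL_1: "phiL a \<gamma> k d 1 = d 0"
  by (simp add: phiL_def)

lemma phiL_2:
  "phiL a \<gamma> k d 2 = (\<lambda>x. DL a \<gamma> (d 1 a / \<gamma>) (d 0) x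
     - (\<Sum>m=2..k. (-1/\<gamma>)^m * d m a * exp (-\<gamma>*(x-a))))"
  by (simp add: phiL_def)

lemma phiL_3:
  "phiL a \<gamma> k d 3 = (\<lambda>x. DL a \<gamma> 0 (phiL a \<gamma> k d 2) x
     + (\<Sum>m=2..k. (real m - 1) * (-1/\<gamma>)^m * d m a * exp (-\<gamma>*(x-a))))"
  by (simp add: phiL_def)

lemma phiR_3:
  "phiR b \<gamma> k d 3 = (\<lambda>x. DR b \<gamma> 0 (phiR b \<gamma> k d 2) x
     + (\<Sum>m=2..k. (real m - 1) * (1/\<gamma>)^m * d m b * exp (-\<gamma>*(b-x))))"
  by (simp add: phiR_def)

section \<open>The reflection x \<mapsto> a + b - x\<close>

lemma integral_reflect_Icc:
  fixes f :: "real \<Rightarrow> real"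
  shows "integral {c..d} (\<lambda>y. f (s - y)) = integral {s-d..s-c} f"
proof -
  have "integral {c..d} (\<lambda>y. f (s - y)) = integral {-d..-c} (\<lambda>z. f (z + s))"
    using Henstock_Kurzweil_Integration.integral_reflect_real[of "-c" "-d" "\<lambda>z. f (z + s)"]
    by simp
  also have "\<dots> = integral {s-d..s-c} f"
    using integral_shift_real_ivl[of "s-d" s "s-c" f] by simp
  finally show ?thesis .
qed

lemma IR_right_endpoint [simp]: "IR b \<gamma> u b = 0"
  by (simp add: IR_def)

lemma IR_eq_IL_reflect: "IR b \<gamma> v x = IL a \<gamma> (\<lambda>y. v (a + b - y)) (a + b - x)"
proof -
  have "integral {a..a+b-x} (\<lambda>y. exp (-\<gamma>*(a+b-x-y)) * v (a+b-y))
      = integral {x..b} (\<lambda>y. exp (-\<gamma>*(y-x)) * v y)"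
    using integral_reflect_Icc[of a "a+b-x" "\<lambda>y. exp (-\<gamma>*(y-x)) * v y" "a+b"]
    by (simp add: algebra_simps)
  then show ?thesis
    unfolding IR_def IL_def by simp
qed

lemma I0_reflect: "I0 a b \<gamma> (\<lambda>y. v (a + b - y)) (a + b - x) = I0 a b \<gamma> v x"
proof -
  have abs_eq: "\<bar>a + b - x - y\<bar> = \<bar>x - (a + b - y)\<bar>" for y
    by arith
  have "integral {a..b} (\<lambda>y. exp (-\<gamma>*\<bar>x - (a + b - y)\<bar>) * v (a + b - y))
      = integral {a..b} (\<lambda>y. exp (-\<gamma>*\<bar>x - y\<bar>) * v y)"
    using integral_reflect_Icc[of a b "\<lambda>y. exp (-\<gamma>*\<bar>x - y\<bar>) * v y" "a+b"] by simp
  then show ?thesis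
    unfolding I0_def abs_eq by simp
qed

lemma DR_eq_DL_reflect: "DR b \<gamma> c v x = DL a \<gamma> c (\<lambda>y. v (a + b - y)) (a + b - x)"
  by (simp add: DR_def DL_def IR_eq_IL_reflect[of b \<gamma> v x a])

lemma DR_reflected_eq_DL: "DR b \<gamma> c (\<lambda>y. v (a + b - y)) x = DL a \<gamma> c v (a + b - x)"
  using DR_eq_DL_reflect[of b \<gamma> c "\<lambda>y. v (a + b - y)" x a] by simp

lemma D0_reflect: "D0 a b \<gamma> ca cb v x = D0 a b \<gamma> cb ca (\<lambda>y. v (a + b - y)) (a + b - x)"
proof -
  have I0: "I0 a b \<gamma> (\<lambda>y. v (a + b - y)) z = I0 a b \<gamma> v (a + b - z)" for z
    using I0_reflect[of a b \<gamma> v "a + b - z"] by simp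
  have exp_a: "a + b - x - a = b - x" and exp_b: "b - (a + b - x) = x - a"
    by simp_all
  show ?thesis
    unfolding D0_def Let_def I0 exp_a exp_b by (simp add: diff_diff_eq add.commute)
qed

lemma continuous_on_reflect:
  fixes a b :: real
  assumes "continuous_on {a..b} f"
  shows "continuous_on {a..b} (\<lambda>y. f (a + b - y))"
proof (rule continuous_on_compose2[OF assms])
  show "continuous_on {a..b} (\<lambda>y. a + b - y)"
    by (rule continuous_on_op_minus)
qed auto

lemma has_real_derivative_reflect:
  assumes "\<And>y. y \<in> {a..b} \<Longrightarrow> (f has_real_derivative f' y) (at y within {a..b})"
    and "y \<in> {a..b}"
  shows "((\<lambda>y. f (a + b - y)) has_real_derivative - f' (a + b - y)) (at y within {a..b})"
proof -
  have "(\<lambda>y. a + b - y) ` {a..b} = {a..b}"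
    by (force simp: image_iff)
  then have "(f has_real_derivative f' (a + b - y)) (at (a + b - y) within (\<lambda>y. a + b - y) ` {a..b})"
    using assms by auto
  moreover have "((\<lambda>y. a + b - y) has_real_derivative -1) (at y within {a..b})"
    by (auto intro!: derivative_eq_intros)
  ultimately show ?thesis
    using DERIV_image_chain by (fastforce simp: o_def)
qed

lemma IR_by_parts:
  fixes w w' :: "real \<Rightarrow> real"
  assumes \<gamma>: "\<gamma> > 0"
    and w: "\<And>y. y \<in> {a..b} \<Longrightarrow> (w has_real_derivative w' y) (at y within {a..b})"
    and w': "continuous_on {a..b} w'" and x: "x \<in> {a..b}"
  shows "IR b \<gamma> w x = w x - w b * exp (-\<gamma>*(b-x)) + IR b \<gamma> w' x / \<gamma>"
proof -
  have "IL a \<gamma> (\<lambda>y. w (a + b - y)) (a + b - x)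
      = w x - w b * exp (-\<gamma>*(b-x)) - IL a \<gamma> (\<lambda>y. - w' (a + b - y)) (a + b - x) / \<gamma>"
    using IL_by_parts[OF \<gamma> has_real_derivative_reflect[OF w] continuous_on_reflect] w' x
    by (simp add: continuous_intros)
  then show ?thesis
    unfolding IR_eq_IL_reflect[of b \<gamma> _ x a] IL_minus by simp
qed

lemma abs_IR_le_weighted:
  fixes u :: "real \<Rightarrow> real"
  assumes \<gamma>: "\<gamma> > 0" and u: "continuous_on {a..b} u"
    and M: "\<And>y. y \<in> {a..b} \<Longrightarrow> \<bar>u y\<bar> \<le> M" and x: "x \<in> {a..b}"
  shows "\<bar>IR b \<gamma> u x\<bar> \<le> M * (1 - exp (-\<gamma>*(b-x)))"
  using abs_IL_le_weighted[OF \<gamma> continuous_on_reflect[OF u], of M "a + b - x"] M x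
  by (simp add: IR_eq_IL_reflect[of b \<gamma> u x a])

lemma abs_IR_le:
  fixes u :: "real \<Rightarrow> real"
  assumes \<gamma>: "\<gamma> > 0" and u: "continuous_on {a..b} u"
    and M: "\<And>y. y \<in> {a..b} \<Longrightarrow> \<bar>u y\<bar> \<le> M" and x: "x \<in> {a..b}"
  shows "\<bar>IR b \<gamma> u x\<bar> \<le> M"
  using abs_IL_le[OF \<gamma> continuous_on_reflect[OF u], of M "a + b - x"] M x
  by (simp add: IR_eq_IL_reflect[of b \<gamma> u x a])

definition reflect_derivs :: "real \<Rightarrow> real \<Rightarrow> (nat \<Rightarrow> real \<Rightarrow> real) \<Rightarrow> nat \<Rightarrow> real \<Rightarrow> real" where
  "reflect_derivs a b d j = (\<lambda>y. (-1)^j * d j (a + b - y))"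

lemma Cn_family_reflect:
  assumes "Cn_family a b n d"
  shows "Cn_family a b n (reflect_derivs a b d)"
  unfolding Cn_family_def
proof (intro conjI ballI allI impI)
  fix j y assume "j < n" "y \<in> {a..b}"
  with assms have "((\<lambda>y. d j (a + b - y)) has_real_derivative - d (Suc j) (a + b - y))
      (at y within {a..b})"
    unfolding Cn_family_def by (intro has_real_derivative_reflect) auto
  from DERIV_cmult[OF this, of "(-1)^j"]
  show "(reflect_derivs a b d j has_real_derivative reflect_derivs a b d (Suc j) y)
      (at y within {a..b})"
    unfolding reflect_derivs_def by simp
next
  show "continuous_on {a..b} (reflect_derivs a b d n)"
    using assms unfolding Cn_family_def reflect_derivs_def
    by (intro continuous_intros continuous_on_reflect) simp
qed

lemma phiR_eq_phiL_reflect: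
  "phiR b \<gamma> k d p = (\<lambda>x. phiL a \<gamma> k (reflect_derivs a b d) p (a + b - x))"
proof -
  have d0: "reflect_derivs a b d 0 = (\<lambda>y. d 0 (a + b - y))"
    by (simp add: reflect_derivs_def)
  have coeff: "(-1/\<gamma>)^m * reflect_derivs a b d m a = (1/\<gamma>)^m * d m b" for m
    by (simp add: reflect_derivs_def flip: mult.assoc power_mult_distrib)
  have d1: "reflect_derivs a b d 1 a = - d 1 b"
    by (simp add: reflect_derivs_def)
  have phi2: "phiR b \<gamma> k d 2 = (\<lambda>x. phiL a \<gamma> k (reflect_derivs a b d) 2 (a + b - x))"
    unfolding phiR_def phiL_def coeff d1 by (simp add: DR_eq_DL_reflect[where a=a] d0)
  have "phiR b \<gamma> k d 3 = (\<lambda>x. phiL a \<gamma> k (reflect_derivs a b d) 3 (a + b - x))"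
    unfolding phiR_3 phiL_3 phi2 DR_reflected_eq_DL mult.assoc[of "real _ - 1"] coeff
    by simp
  then show ?thesis
    using phi2 by (auto simp: phiR_def phiL_def d0)
qed

lemma PR_eq_PL_reflect:
  "PR a b \<gamma> k d x = - PL a b \<gamma> k (reflect_derivs a b d) (a + b - x)"
  unfolding PR_def PL_def phiR_eq_phiL_reflect[where a=a] DR_reflected_eq_DL
    D0_reflect[of a b \<gamma> 0 0 "\<lambda>x. phiL a \<gamma> k (reflect_derivs a b d) 3 (a + b - x)" x]
  by (simp add: reflect_derivs_def sum_negf)

section \<open>The boundary correction D_0\<close>

lemma I0_split:
  fixes v :: "real \<Rightarrow> real"
  assumes v: "continuous_on {a..b} v" and x: "x \<in> {a..b}"
  shows "I0 a b \<gamma> v x = (IL a \<gamma> v x + IR b \<gamma> v x) / 2"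
proof -
  have "continuous_on {a..b} (\<lambda>y. exp (-\<gamma>*\<bar>x-y\<bar>) * v y)"
    by (intro continuous_intros v)
  then have "integral {a..b} (\<lambda>y. exp (-\<gamma>*\<bar>x-y\<bar>) * v y)
      = integral {a..x} (\<lambda>y. exp (-\<gamma>*\<bar>x-y\<bar>) * v y) + integral {x..b} (\<lambda>y. exp (-\<gamma>*\<bar>x-y\<bar>) * v y)"
    using x by (intro Henstock_Kurzweil_Integration.integral_combine[symmetric]
        integrable_continuous_interval) auto
  also have "integral {a..x} (\<lambda>y. exp (-\<gamma>*\<bar>x-y\<bar>) * v y) = integral {a..x} (\<lambda>y. exp (-\<gamma>*(x-y)) * v y)"
    by (rule integral_cong) auto
  also have "integral {x..b} (\<lambda>y. exp (-\<gamma>*\<bar>x-y\<bar>) * v y) = integral {x..b} (\<lambda>y. exp (-\<gamma>*(y-x)) * v y)"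
    by (rule integral_cong) auto
  finally show ?thesis
    unfolding I0_def IL_def IR_def by (simp add: algebra_simps)
qed

lemma abs_I0_le:
  fixes u :: "real \<Rightarrow> real"
  assumes \<gamma>: "\<gamma> > 0" and u: "continuous_on {a..b} u"
    and M: "\<And>y. y \<in> {a..b} \<Longrightarrow> \<bar>u y\<bar> \<le> M" and x: "x \<in> {a..b}"
  shows "\<bar>I0 a b \<gamma> u x\<bar> \<le> M"
  using abs_IL_le[OF assms] abs_IR_le[OF assms] unfolding I0_split[OF u x] by simp

lemma abs_I0_endpoints_le:
  fixes u :: "real \<Rightarrow> real"
  assumes ab: "a \<le> b" and \<gamma>: "\<gamma> > 0" and u: "continuous_on {a..b} u"
    and M: "\<And>y. y \<in> {a..b} \<Longrightarrow> \<bar>u y\<bar> \<le> M"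
  shows "\<bar>I0 a b \<gamma> u a\<bar> \<le> M * (1 - exp (-\<gamma>*(b-a))) / 2"
    and "\<bar>I0 a b \<gamma> u b\<bar> \<le> M * (1 - exp (-\<gamma>*(b-a))) / 2"
proof -
  have ends: "a \<in> {a..b}" "b \<in> {a..b}"
    using ab by auto
  show "\<bar>I0 a b \<gamma> u a\<bar> \<le> M * (1 - exp (-\<gamma>*(b-a))) / 2"
    using abs_IR_le_weighted[OF \<gamma> u M ends(1)] unfolding I0_split[OF u ends(1)] by simp
  show "\<bar>I0 a b \<gamma> u b\<bar> \<le> M * (1 - exp (-\<gamma>*(b-a))) / 2"
    using abs_IL_le_weighted[OF \<gamma> u M ends(2)] unfolding I0_split[OF u ends(2)] by simp
qed

lemma I0_by_parts:
  fixes v v' v'' :: "real \<Rightarrow> real"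
  assumes \<gamma>: "\<gamma> > 0"
    and v: "\<And>y. y \<in> {a..b} \<Longrightarrow> (v has_real_derivative v' y) (at y within {a..b})"
    and v': "\<And>y. y \<in> {a..b} \<Longrightarrow> (v' has_real_derivative v'' y) (at y within {a..b})"
    and v'': "continuous_on {a..b} v''" and z: "z \<in> {a..b}"
  shows "v z - I0 a b \<gamma> v z = (v a - v' a / \<gamma>) / 2 * exp (-\<gamma>*(z-a))
    + (v b + v' b / \<gamma>) / 2 * exp (-\<gamma>*(b-z)) - I0 a b \<gamma> v'' z / \<gamma>^2"
proof -
  have cont: "continuous_on {a..b} v" "continuous_on {a..b} v'"
    using DERIV_continuous_on[OF v] DERIV_continuous_on[OF v'] by auto
  have IL_v: "IL a \<gamma> v z = v z - v a * exp (-\<gamma>*(z-a))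
      - (v' z - v' a * exp (-\<gamma>*(z-a)) - IL a \<gamma> v'' z / \<gamma>) / \<gamma>"
    using IL_by_parts[OF \<gamma> v cont(2) z] IL_by_parts[OF \<gamma> v' v'' z] by simp
  have IR_v: "IR b \<gamma> v z = v z - v b * exp (-\<gamma>*(b-z))
      + (v' z - v' b * exp (-\<gamma>*(b-z)) + IR b \<gamma> v'' z / \<gamma>) / \<gamma>"
    using IR_by_parts[OF \<gamma> v cont(2) z] IR_by_parts[OF \<gamma> v' v'' z] by simp
  show ?thesis
    unfolding I0_split[OF cont(1) z] I0_split[OF v'' z] IL_v IR_v
    using \<gamma> by (simp add: field_simps power2_eq_square)
qed

lemma D0_eq_remainder:
  fixes v h :: "real \<Rightarrow> real"
  assumes "a < b" and "\<gamma> > 0" and x: "x \<in> {a..b}"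
    and v: "\<And>z. z \<in> {a..b} \<Longrightarrow>
      v z - I0 a b \<gamma> v z = A * exp (-\<gamma>*(z-a)) + B * exp (-\<gamma>*(b-z)) + h z"
  defines "\<mu> \<equiv> exp (-\<gamma>*(b-a))"
  shows "D0 a b \<gamma> 0 0 v x = h x - (h a - \<mu> * h b) / (1 - \<mu>^2) * exp (-\<gamma>*(x-a))
    - (h b - \<mu> * h a) / (1 - \<mu>^2) * exp (-\<gamma>*(b-x))"
proof -
  have "\<mu> < 1" "0 \<le> \<mu>"
    unfolding \<mu>_def using assms by simp_all
  then have "\<mu>^2 < 1"
    by (simp add: power_less_one_iff)
  then have \<mu>: "1 - \<mu>^2 \<noteq> 0"
    by simp
  have Ia: "I0 a b \<gamma> v a = v a - (A + B * \<mu> + h a)"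
    and Ib: "I0 a b \<gamma> v b = v b - (A * \<mu> + B + h b)"
    using v[of a] v[of b] \<open>a < b\<close> unfolding \<mu>_def by auto
  have Ix: "I0 a b \<gamma> v x = v x - (A * exp (-\<gamma>*(x-a)) + B * exp (-\<gamma>*(b-x)) + h x)"
    using v[OF x] by simp
  show ?thesis
    unfolding D0_def Let_def \<mu>_def[symmetric] Ia Ib Ix
    using \<mu> by (simp add: field_simps power2_eq_square)
qed

lemma abs_boundary_term_le:
  fixes \<mu> p q P e :: real
  assumes "0 \<le> \<mu>" and "\<mu> < 1" and p: "\<bar>p\<bar> \<le> P * (1 - \<mu>)" and q: "\<bar>q\<bar> \<le> P * (1 - \<mu>)"
    and "0 \<le> e" and "e \<le> 1"
  shows "\<bar>(p - \<mu> * q) / (1 - \<mu>^2) * e\<bar> \<le> P"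
proof -
  have "\<bar>p - \<mu> * q\<bar> \<le> \<bar>p\<bar> + \<mu> * \<bar>q\<bar>"
    using abs_triangle_ineq4[of p "\<mu> * q"] assms(1) by (simp add: abs_mult)
  also have "\<dots> \<le> P * (1 - \<mu>) + \<mu> * (P * (1 - \<mu>))"
    using p q assms(1) by (intro add_mono mult_left_mono)
  also have "\<dots> = P * (1 - \<mu>^2)"
    by (simp add: algebra_simps power2_eq_square)
  finally have "\<bar>p - \<mu> * q\<bar> \<le> P * (1 - \<mu>^2)" .
  moreover have "0 < 1 - \<mu>^2"
    using assms(1,2) by (simp add: power_less_one_iff)
  ultimately have coeff: "\<bar>(p - \<mu> * q) / (1 - \<mu>^2)\<bar> \<le> P"
    by (simp add: abs_div pos_divide_le_eq)
  have "\<bar>(p - \<mu> * q) / (1 - \<mu>^2) * e\<bar> = \<bar>(p - \<mu> * q) / (1 - \<mu>^2)\<bar> * e"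
    using assms(5) by (simp only: abs_mult abs_of_nonneg)
  also have "\<dots> \<le> \<bar>(p - \<mu> * q) / (1 - \<mu>^2)\<bar>"
    by (rule mult_left_le[OF assms(6) abs_ge_zero])
  finally show ?thesis
    using coeff by linarith
qed

lemma abs_D0_le:
  fixes v v' v'' :: "real \<Rightarrow> real"
  assumes ab: "a < b" and \<gamma>: "\<gamma> > 0"
    and v: "\<And>y. y \<in> {a..b} \<Longrightarrow> (v has_real_derivative v' y) (at y within {a..b})"
    and v': "\<And>y. y \<in> {a..b} \<Longrightarrow> (v' has_real_derivative v'' y) (at y within {a..b})"
    and v'': "continuous_on {a..b} v''"
    and M: "\<And>y. y \<in> {a..b} \<Longrightarrow> \<bar>v'' y\<bar> \<le> M" and x: "x \<in> {a..b}"
  shows "\<bar>D0 a b \<gamma> 0 0 v x\<bar> \<le> 2 * M / \<gamma>^2"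
proof -
  define \<mu> where "\<mu> = exp (-\<gamma>*(b-a))"
  define h where "h z = - I0 a b \<gamma> v'' z / \<gamma>^2" for z
  define P where "P = M / (2 * \<gamma>^2)"
  have \<mu>: "0 \<le> \<mu>" "\<mu> < 1"
    unfolding \<mu>_def using ab \<gamma> by auto
  have "v z - I0 a b \<gamma> v z = (v a - v' a / \<gamma>) / 2 * exp (-\<gamma>*(z-a))
      + (v b + v' b / \<gamma>) / 2 * exp (-\<gamma>*(b-z)) + h z" if "z \<in> {a..b}" for z
    unfolding h_def using I0_by_parts[OF \<gamma> v v' v'' that] by simp
  from D0_eq_remainder[OF ab \<gamma> x this]
  have D0_eq: "D0 a b \<gamma> 0 0 v x = h x - (h a - \<mu> * h b) / (1 - \<mu>^2) * exp (-\<gamma>*(x-a))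
      - (h b - \<mu> * h a) / (1 - \<mu>^2) * exp (-\<gamma>*(b-x))"
    unfolding \<mu>_def .
  have hx: "\<bar>h x\<bar> \<le> 2 * P"
    using abs_I0_le[OF \<gamma> v'' M x] \<gamma> unfolding h_def P_def by (simp add: abs_div field_simps)
  have ha: "\<bar>h a\<bar> \<le> P * (1 - \<mu>)" and hb: "\<bar>h b\<bar> \<le> P * (1 - \<mu>)"
    using abs_I0_endpoints_le[OF less_imp_le[OF ab] \<gamma> v'' M] \<gamma>
    unfolding h_def P_def \<mu>_def by (simp_all add: abs_div field_simps)
  have "\<bar>(h a - \<mu> * h b) / (1 - \<mu>^2) * exp (-\<gamma>*(x-a))\<bar> \<le> P"
    using x \<gamma> by (intro abs_boundary_term_le[OF \<mu> ha hb]) auto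
  moreover have "\<bar>(h b - \<mu> * h a) / (1 - \<mu>^2) * exp (-\<gamma>*(b-x))\<bar> \<le> P"
    using x \<gamma> by (intro abs_boundary_term_le[OF \<mu> hb ha]) auto
  ultimately have "\<bar>D0 a b \<gamma> 0 0 v x\<bar> \<le> 4 * P"
    using hx unfolding D0_eq abs_le_iff by linarith
  then show ?thesis
    unfolding P_def by (simp add: field_simps)
qed

section \<open>The error of the modified partial sums\<close>

lemma DL_first_order:
  assumes \<gamma>: "\<gamma> > 0" and cn: "Cn_family a b 2 d" and x: "x \<in> {a..b}"
  shows "\<gamma> * DL a \<gamma> (d 1 a / \<gamma>) (d 0) x = d 1 x - IL a \<gamma> (d 2) x / \<gamma>"
proof -
  have "(d 0 has_real_derivative d 1 y) (at y within {a..b})" if "y \<in> {a..b}" for y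
    using Cn_familyD[OF cn _ that, of 0] by simp
  from DL_eq_IL[OF \<gamma> this Cn_family_continuous[OF cn] x]
  have "\<gamma> * DL a \<gamma> (d 1 a / \<gamma>) (d 0) x = IL a \<gamma> (d 1) x + d 1 a * exp (-\<gamma>*(x-a))"
    using \<gamma> by simp
  then show ?thesis
    using Cn_family_IL_by_parts[OF \<gamma> cn _ x, of 1] unfolding Suc_1 by simp
qed

lemma PL_1_error:
  assumes "\<gamma> > 0" and "Cn_family a b 2 d" and "x \<in> {a..b}"
  shows "d 1 x - PL a b \<gamma> 1 d x = IL a \<gamma> (d 2) x / \<gamma>"
  using DL_first_order[OF assms] unfolding PL_def phiL_1 by simp

lemma phiL_2_has_derivative:
  assumes \<gamma>: "\<gamma> > 0" and cn: "Cn_family a b 2 d" and y: "y \<in> {a..b}"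
  shows "(phiL a \<gamma> k d 2 has_real_derivative IL a \<gamma> (d 2) y / \<gamma>
    + \<gamma> * (\<Sum>m=2..k. (-1/\<gamma>)^m * d m a * exp (-\<gamma>*(y-a)))) (at y within {a..b})"
proof -
  have "(d 0 has_real_derivative d 1 z) (at z within {a..b})" if "z \<in> {a..b}" for z
    using Cn_familyD[OF cn _ that, of 0] by simp
  note DL' = DL_has_derivative[OF this y, of \<gamma> "d 1 a / \<gamma>"]
  have exp': "((\<lambda>x. exp (-\<gamma>*(x-a))) has_real_derivative -\<gamma> * exp (-\<gamma>*(y-a))) (at y within {a..b})"
    by (auto intro!: derivative_eq_intros)
  have "(phiL a \<gamma> k d 2 has_real_derivative d 1 y - \<gamma> * DL a \<gamma> (d 1 a / \<gamma>) (d 0) y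
      - (\<Sum>m=2..k. (-1/\<gamma>)^m * d m a * (-\<gamma> * exp (-\<gamma>*(y-a))))) (at y within {a..b})"
    unfolding phiL_2 by (intro DERIV_diff DL' DERIV_sum DERIV_cmult exp')
  moreover have "(\<Sum>m=2..k. (-1/\<gamma>)^m * d m a * (-\<gamma> * exp (-\<gamma>*(y-a))))
      = - \<gamma> * (\<Sum>m=2..k. (-1/\<gamma>)^m * d m a * exp (-\<gamma>*(y-a)))"
    by (simp add: sum_distrib_left mult.left_commute)
  ultimately show ?thesis
    unfolding DL_first_order[OF \<gamma> cn y] by simp
qed

lemma PL_2_error:
  assumes \<gamma>: "\<gamma> > 0" and cn: "Cn_family a b 3 d" and x: "x \<in> {a..b}"
  shows "d 1 x - PL a b \<gamma> 2 d x = IL a \<gamma> (IL a \<gamma> (d 3)) x / \<gamma>^2"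
proof -
  have cn2: "Cn_family a b 2 d"
    using Cn_family_mono[OF cn] by simp
  have c2: "continuous_on {a..b} (d 2)" and c3: "continuous_on {a..b} (IL a \<gamma> (d 3))"
    using Cn_family_continuous[OF cn] continuous_on_IL by auto
  define \<phi>' where "\<phi>' = (\<lambda>y. (1/\<gamma>) * d 2 y + (-1/\<gamma>^2) * IL a \<gamma> (d 3) y)"
  have \<phi>_deriv: "(phiL a \<gamma> 2 d 2 has_real_derivative \<phi>' y) (at y within {a..b})" if "y \<in> {a..b}" for y
    using phiL_2_has_derivative[OF \<gamma> cn2 that]
  proof (rule DERIV_cong)
    have ibp: "IL a \<gamma> (d 2) y = d 2 y - d 2 a * exp (-\<gamma>*(y-a)) - IL a \<gamma> (d 3) y / \<gamma>"
      using Cn_family_IL_by_parts[OF \<gamma> cn _ that, of 2] by simp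
    show "IL a \<gamma> (d 2) y / \<gamma> + \<gamma> * (\<Sum>m=2..2. (-1/\<gamma>)^m * d m a * exp (-\<gamma>*(y-a))) = \<phi>' y"
      unfolding \<phi>'_def ibp using \<gamma> by (simp add: field_simps power2_eq_square)
  qed
  have "continuous_on {a..b} \<phi>'"
    unfolding \<phi>'_def by (intro continuous_intros c2 c3)
  from DL_eq_IL[OF \<gamma> \<phi>_deriv this x]
  have "\<gamma> * DL a \<gamma> 0 (phiL a \<gamma> 2 d 2) x = IL a \<gamma> \<phi>' x"
    by simp
  also have "\<dots> = IL a \<gamma> (d 2) x / \<gamma> - IL a \<gamma> (IL a \<gamma> (d 3)) x / \<gamma>^2"
    unfolding \<phi>'_def IL_linear[OF c2 c3 x] by simp
  finally have "\<gamma> * DL a \<gamma> 0 (phiL a \<gamma> 2 d 2) x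
      = IL a \<gamma> (d 2) x / \<gamma> - IL a \<gamma> (IL a \<gamma> (d 3)) x / \<gamma>^2" .
  then show ?thesis
    using DL_first_order[OF \<gamma> cn2 x] unfolding PL_def phiL_1 by (simp add: algebra_simps)
qed

lemma phiL_3_2_has_derivative:
  assumes \<gamma>: "\<gamma> > 0" and cn: "Cn_family a b 4 d" and y: "y \<in> {a..b}"
  shows "(phiL a \<gamma> 3 d 2 has_real_derivative
    (1/\<gamma>) * d 2 y + (-1/\<gamma>^2) * d 3 y + (1/\<gamma>^3) * IL a \<gamma> (d 4) y) (at y within {a..b})"
proof -
  have cn2: "Cn_family a b 2 d"
    using Cn_family_mono[OF cn] by simp
  have ibp2: "IL a \<gamma> (d 2) y = d 2 y - d 2 a * exp (-\<gamma>*(y-a)) - IL a \<gamma> (d 3) y / \<gamma>"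
    and ibp3: "IL a \<gamma> (d 3) y = d 3 y - d 3 a * exp (-\<gamma>*(y-a)) - IL a \<gamma> (d 4) y / \<gamma>"
    using Cn_family_IL_by_parts[OF \<gamma> cn _ y, of 2] Cn_family_IL_by_parts[OF \<gamma> cn _ y, of 3] by simp_all
  have "{2..3::nat} = {2, 3}"
    by auto
  then have "IL a \<gamma> (d 2) y / \<gamma> + \<gamma> * (\<Sum>m=2..3. (-1/\<gamma>)^m * d m a * exp (-\<gamma>*(y-a)))
      = (1/\<gamma>) * d 2 y + (-1/\<gamma>^2) * d 3 y + (1/\<gamma>^3) * IL a \<gamma> (d 4) y"
    unfolding ibp2 ibp3 using \<gamma> by (simp add: field_simps power2_eq_square power3_eq_cube)
  then show ?thesis
    by (rule DERIV_cong[OF phiL_2_has_derivative[OF \<gamma> cn2 y, where k=3]])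
qed

lemma DL_phiL_3_2_eq:
  assumes \<gamma>: "\<gamma> > 0" and cn: "Cn_family a b 4 d" and x: "x \<in> {a..b}"
  shows "\<gamma> * DL a \<gamma> 0 (phiL a \<gamma> 3 d 2) x = (1/\<gamma>) * IL a \<gamma> (d 2) x
    + (-1/\<gamma>^2) * IL a \<gamma> (d 3) x + (1/\<gamma>^3) * IL a \<gamma> (IL a \<gamma> (d 4)) x"
proof -
  have c: "continuous_on {a..b} (d 2)" "continuous_on {a..b} (d 3)"
    "continuous_on {a..b} (IL a \<gamma> (d 4))"
    using Cn_family_continuous[OF cn] continuous_on_IL by auto
  then have "continuous_on {a..b}
      (\<lambda>y. (1/\<gamma>) * d 2 y + (-1/\<gamma>^2) * d 3 y + (1/\<gamma>^3) * IL a \<gamma> (d 4) y)"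
    by (intro continuous_intros)
  from DL_eq_IL[OF \<gamma> phiL_3_2_has_derivative[OF \<gamma> cn] this x]
  show ?thesis
    unfolding IL_linear3[OF c x] by simp
qed

lemma phiL_3_3_has_derivative:
  assumes \<gamma>: "\<gamma> > 0" and cn: "Cn_family a b 4 d" and y: "y \<in> {a..b}"
  shows "(phiL a \<gamma> 3 d 3 has_real_derivative (1/\<gamma>^2) * d 3 y
    + (-1/\<gamma>^3) * IL a \<gamma> (d 4) y + (-1/\<gamma>^3) * IL a \<gamma> (IL a \<gamma> (d 4)) y) (at y within {a..b})"
proof -
  note DL' = DL_has_derivative[OF phiL_3_2_has_derivative[OF \<gamma> cn] y, where \<gamma>=\<gamma> and c=0]
  have exp': "((\<lambda>x. exp (-\<gamma>*(x-a))) has_real_derivative -\<gamma> * exp (-\<gamma>*(y-a))) (at y within {a..b})"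
    by (auto intro!: derivative_eq_intros)
  have deriv: "(phiL a \<gamma> 3 d 3 has_real_derivative
      (1/\<gamma>) * d 2 y + (-1/\<gamma>^2) * d 3 y + (1/\<gamma>^3) * IL a \<gamma> (d 4) y - \<gamma> * DL a \<gamma> 0 (phiL a \<gamma> 3 d 2) y
      + (\<Sum>m=2..3. (real m - 1) * (-1/\<gamma>)^m * d m a * (-\<gamma> * exp (-\<gamma>*(y-a))))) (at y within {a..b})"
    unfolding phiL_3 by (intro DERIV_add DL' DERIV_sum DERIV_cmult exp')
  have ibp2: "IL a \<gamma> (d 2) y = d 2 y - d 2 a * exp (-\<gamma>*(y-a)) - IL a \<gamma> (d 3) y / \<gamma>"
    and ibp3: "IL a \<gamma> (d 3) y = d 3 y - d 3 a * exp (-\<gamma>*(y-a)) - IL a \<gamma> (d 4) y / \<gamma>"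
    using Cn_family_IL_by_parts[OF \<gamma> cn _ y, of 2] Cn_family_IL_by_parts[OF \<gamma> cn _ y, of 3] by simp_all
  have "{2..3::nat} = {2, 3}"
    by auto
  then have "(1/\<gamma>) * d 2 y + (-1/\<gamma>^2) * d 3 y + (1/\<gamma>^3) * IL a \<gamma> (d 4) y
      - \<gamma> * DL a \<gamma> 0 (phiL a \<gamma> 3 d 2) y
      + (\<Sum>m=2..3. (real m - 1) * (-1/\<gamma>)^m * d m a * (-\<gamma> * exp (-\<gamma>*(y-a))))
    = (1/\<gamma>^2) * d 3 y + (-1/\<gamma>^3) * IL a \<gamma> (d 4) y + (-1/\<gamma>^3) * IL a \<gamma> (IL a \<gamma> (d 4)) y"
    unfolding DL_phiL_3_2_eq[OF \<gamma> cn y] ibp2 ibp3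
    using \<gamma> by (simp add: field_simps power2_eq_square power3_eq_cube)
  with deriv show ?thesis
    by (rule DERIV_cong)
qed

lemma DL_phiL_3_3_eq:
  assumes \<gamma>: "\<gamma> > 0" and cn: "Cn_family a b 4 d" and x: "x \<in> {a..b}"
  shows "\<gamma> * DL a \<gamma> 0 (phiL a \<gamma> 3 d 3) x = (1/\<gamma>^2) * IL a \<gamma> (d 3) x
    + (-1/\<gamma>^3) * IL a \<gamma> (IL a \<gamma> (d 4)) x + (-1/\<gamma>^3) * IL a \<gamma> (IL a \<gamma> (IL a \<gamma> (d 4))) x"
proof -
  have c: "continuous_on {a..b} (d 3)" "continuous_on {a..b} (IL a \<gamma> (d 4))"
    "continuous_on {a..b} (IL a \<gamma> (IL a \<gamma> (d 4)))"
    using Cn_family_continuous[OF cn] continuous_on_IL by auto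
  then have "continuous_on {a..b} (\<lambda>y. (1/\<gamma>^2) * d 3 y + (-1/\<gamma>^3) * IL a \<gamma> (d 4) y
      + (-1/\<gamma>^3) * IL a \<gamma> (IL a \<gamma> (d 4)) y)"
    by (intro continuous_intros)
  from DL_eq_IL[OF \<gamma> phiL_3_3_has_derivative[OF \<gamma> cn] this x]
  show ?thesis
    unfolding IL_linear3[OF c x] by simp
qed

lemma PL_3_error:
  assumes \<gamma>: "\<gamma> > 0" and cn: "Cn_family a b 4 d" and x: "x \<in> {a..b}"
  shows "d 1 x - PL a b \<gamma> 3 d x
    = IL a \<gamma> (IL a \<gamma> (IL a \<gamma> (d 4))) x / \<gamma>^3 + \<gamma> * D0 a b \<gamma> 0 0 (phiL a \<gamma> 3 d 3) x"
proof -
  have cn2: "Cn_family a b 2 d"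
    using Cn_family_mono[OF cn] by simp
  have "{2..3::nat} = {2, 3}"
    by auto
  then have "PL a b \<gamma> 3 d x = \<gamma> * DL a \<gamma> (d 1 a / \<gamma>) (d 0) x + \<gamma> * DL a \<gamma> 0 (phiL a \<gamma> 3 d 2) x
      + \<gamma> * DL a \<gamma> 0 (phiL a \<gamma> 3 d 3) x - \<gamma> * D0 a b \<gamma> 0 0 (phiL a \<gamma> 3 d 3) x"
    unfolding PL_def phiL_1 by (simp add: distrib_left)
  then show ?thesis
    unfolding DL_first_order[OF \<gamma> cn2 x] DL_phiL_3_2_eq[OF \<gamma> cn x]
      DL_phiL_3_3_eq[OF \<gamma> cn x]
    by (simp add: field_simps)
qed

lemma abs_D0_phiL_3_le:
  assumes ab: "a < b" and \<gamma>: "\<gamma> > 0" and cn: "Cn_family a b 4 d"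
    and M: "\<And>y. y \<in> {a..b} \<Longrightarrow> \<bar>d 4 y\<bar> \<le> M" and x: "x \<in> {a..b}"
  shows "\<bar>\<gamma> * D0 a b \<gamma> 0 0 (phiL a \<gamma> 3 d 3) x\<bar> \<le> 2 * M / \<gamma>^3"
proof -
  have c4: "continuous_on {a..b} (d 4)"
    using Cn_family_continuous[OF cn] by simp
  have c4': "continuous_on {a..b} (IL a \<gamma> (d 4))"
    by (rule continuous_on_IL[OF c4])
  have "((\<lambda>y. (1/\<gamma>^2) * d 3 y + (-1/\<gamma>^3) * IL a \<gamma> (d 4) y + (-1/\<gamma>^3) * IL a \<gamma> (IL a \<gamma> (d 4)) y)
      has_real_derivative IL a \<gamma> (IL a \<gamma> (d 4)) y / \<gamma>^2) (at y within {a..b})"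
    if y: "y \<in> {a..b}" for y
  proof -
    have "(d 3 has_real_derivative d 4 y) (at y within {a..b})"
      using Cn_familyD[OF cn _ y, of 3] by simp
    from DERIV_add[OF DERIV_add[OF DERIV_cmult[OF this] DERIV_cmult[OF IL_has_derivative[OF c4 y]]]
        DERIV_cmult[OF IL_has_derivative[OF c4' y]]]
    show ?thesis
      by (rule DERIV_cong) (use \<gamma> in \<open>simp add: field_simps power2_eq_square power3_eq_cube\<close>)
  qed
  moreover have "continuous_on {a..b} (\<lambda>y. IL a \<gamma> (IL a \<gamma> (d 4)) y / \<gamma>^2)"
    using continuous_on_IL[OF c4'] \<gamma> by (intro continuous_intros) auto
  moreover have "\<bar>IL a \<gamma> (IL a \<gamma> (d 4)) y / \<gamma>^2\<bar> \<le> M / \<gamma>^2" if y: "y \<in> {a..b}" for y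
    using abs_IL_le[OF \<gamma> c4' abs_IL_le[OF \<gamma> c4 M] y] by (simp add: abs_div divide_right_mono)
  ultimately have "\<bar>D0 a b \<gamma> 0 0 (phiL a \<gamma> 3 d 3) x\<bar> \<le> 2 * (M / \<gamma>^2) / \<gamma>^2"
    by (intro abs_D0_le[OF ab \<gamma> phiL_3_3_has_derivative[OF \<gamma> cn] _ _ _ x])
  then show ?thesis
    using \<gamma> by (simp add: abs_mult field_simps power2_eq_square power3_eq_cube)
qed

lemma abs_PL_1_error_le:
  assumes \<gamma>: "\<gamma> > 0" and cn: "Cn_family a b 2 d"
    and M: "\<And>y. y \<in> {a..b} \<Longrightarrow> \<bar>d 2 y\<bar> \<le> M" and x: "x \<in> {a..b}"
  shows "\<bar>d 1 x - PL a b \<gamma> 1 d x\<bar> \<le> M / \<gamma>"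
  unfolding PL_1_error[OF \<gamma> cn x]
  using abs_IL_le[OF \<gamma> Cn_family_continuous[OF cn] M x] \<gamma> by (simp add: abs_div divide_right_mono)

lemma abs_PL_2_error_le:
  assumes \<gamma>: "\<gamma> > 0" and cn: "Cn_family a b 3 d"
    and M: "\<And>y. y \<in> {a..b} \<Longrightarrow> \<bar>d 3 y\<bar> \<le> M" and x: "x \<in> {a..b}"
  shows "\<bar>d 1 x - PL a b \<gamma> 2 d x\<bar> \<le> M / \<gamma>^2"
proof -
  have c: "continuous_on {a..b} (d 3)"
    using Cn_family_continuous[OF cn] by simp
  have "\<bar>IL a \<gamma> (IL a \<gamma> (d 3)) x\<bar> \<le> M"
    using abs_IL_le[OF \<gamma> continuous_on_IL[OF c] abs_IL_le[OF \<gamma> c M] x] .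
  then show ?thesis
    unfolding PL_2_error[OF \<gamma> cn x] using \<gamma> by (simp add: abs_div divide_right_mono)
qed

lemma abs_PL_3_error_le:
  assumes ab: "a < b" and \<gamma>: "\<gamma> > 0" and cn: "Cn_family a b 4 d"
    and M: "\<And>y. y \<in> {a..b} \<Longrightarrow> \<bar>d 4 y\<bar> \<le> M" and x: "x \<in> {a..b}"
  shows "\<bar>d 1 x - PL a b \<gamma> 3 d x\<bar> \<le> 3 * M / \<gamma>^3"
proof -
  have c: "continuous_on {a..b} (d 4)"
    using Cn_family_continuous[OF cn] by simp
  have "\<bar>IL a \<gamma> (IL a \<gamma> (IL a \<gamma> (d 4))) x\<bar> \<le> M"
    using abs_IL_le[OF \<gamma> continuous_on_IL[OF continuous_on_IL[OF c]]
        abs_IL_le[OF \<gamma> continuous_on_IL[OF c] abs_IL_le[OF \<gamma> c M]] x] .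
  then have "\<bar>IL a \<gamma> (IL a \<gamma> (IL a \<gamma> (d 4))) x / \<gamma>^3\<bar> \<le> M / \<gamma>^3"
    using \<gamma> by (simp add: abs_div divide_right_mono)
  with abs_D0_phiL_3_le[OF ab \<gamma> cn M x] show ?thesis
    unfolding PL_3_error[OF \<gamma> cn x] by linarith
qed

lemma PL_error_bound:
  assumes ab: "a < b" and \<gamma>: "\<gamma> > 0" and k: "k \<in> {1, 2, 3}" and cn: "Cn_family a b (k + 1) d"
    and M: "\<And>y. y \<in> {a..b} \<Longrightarrow> \<bar>d (k + 1) y\<bar> \<le> M" and x: "x \<in> {a..b}"
  shows "\<bar>d 1 x - PL a b \<gamma> k d x\<bar> \<le> 3 * (1/\<gamma>)^k * M"
proof -
  have "0 \<le> M"
    using M[OF x] by linarith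
  from k consider "k = 1" | "k = 2" | "k = 3"
    by auto
  then show ?thesis
  proof cases
    case 1
    with cn M have "\<bar>d 1 x - PL a b \<gamma> 1 d x\<bar> \<le> M / \<gamma>"
      by (intro abs_PL_1_error_le[OF \<gamma> _ _ x]) (simp_all add: eval_nat_numeral)
    with 1 \<open>0 \<le> M\<close> \<gamma> show ?thesis
      by (simp add: field_simps)
  next
    case 2
    with cn M have "\<bar>d 1 x - PL a b \<gamma> 2 d x\<bar> \<le> M / \<gamma>^2"
      by (intro abs_PL_2_error_le[OF \<gamma> _ _ x]) (simp_all add: eval_nat_numeral)
    with 2 \<open>0 \<le> M\<close> \<gamma> show ?thesis
      by (simp add: field_simps power2_eq_square)
  next
    case 3
    with cn M have "\<bar>d 1 x - PL a b \<gamma> 3 d x\<bar> \<le> 3 * M / \<gamma>^3"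
      by (intro abs_PL_3_error_le[OF ab \<gamma> _ _ x]) (simp_all add: eval_nat_numeral)
    with 3 show ?thesis
      by (simp add: power_one_over)
  qed
qed

lemma PR_error_bound:
  assumes ab: "a < b" and \<gamma>: "\<gamma> > 0" and k: "k \<in> {1, 2, 3}" and cn: "Cn_family a b (k + 1) d"
    and M: "\<And>y. y \<in> {a..b} \<Longrightarrow> \<bar>d (k + 1) y\<bar> \<le> M" and x: "x \<in> {a..b}"
  shows "\<bar>d 1 x - PR a b \<gamma> k d x\<bar> \<le> 3 * (1/\<gamma>)^k * M"
proof -
  let ?d = "reflect_derivs a b d"
  have "\<bar>?d (k + 1) y\<bar> \<le> M" if "y \<in> {a..b}" for y
    using M[of "a + b - y"] that by (simp add: reflect_derivs_def abs_mult)
  from PL_error_bound[OF ab \<gamma> k Cn_family_reflect[OF cn] this, of "a + b - x"] x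
  have "\<bar>?d 1 (a + b - x) - PL a b \<gamma> k ?d (a + b - x)\<bar> \<le> 3 * (1/\<gamma>)^k * M"
    by simp
  moreover have "?d 1 (a + b - x) = - d 1 x"
    by (simp add: reflect_derivs_def)
  ultimately show ?thesis
    unfolding PR_eq_PL_reflect[of a b \<gamma> k d x] by arith
qed

theorem theorem2:
  fixes a b :: real and k :: nat
  assumes "a < b" and "k \<in> {1, 2, 3}"
  shows "\<exists>C>0. \<forall>\<gamma>>0. \<forall>d :: nat \<Rightarrow> real \<Rightarrow> real. Cn_family a b (k+1) d \<longrightarrow>
           (\<forall>x\<in>{a..b}. \<bar>d 1 x - PL a b \<gamma> k d x\<bar> \<le> C * (1/\<gamma>)^k * (SUP y\<in>{a..b}. \<bar>d (k+1) y\<bar>)) \<and>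
           (\<forall>x\<in>{a..b}. \<bar>d 1 x - PR a b \<gamma> k d x\<bar> \<le> C * (1/\<gamma>)^k * (SUP y\<in>{a..b}. \<bar>d (k+1) y\<bar>))"
proof (intro exI[of _ 3] conjI allI impI ballI)
  fix \<gamma> :: real and d :: "nat \<Rightarrow> real \<Rightarrow> real" and x
  assume \<gamma>: "\<gamma> > 0" and cn: "Cn_family a b (k+1) d" and x: "x \<in> {a..b}"
  have "continuous_on {a..b} (\<lambda>y. \<bar>d (k+1) y\<bar>)"
    using Cn_family_continuous[OF cn] by (intro continuous_intros) simp
  then have "bdd_above ((\<lambda>y. \<bar>d (k+1) y\<bar>) ` {a..b})"
    by (intro bounded_imp_bdd_above compact_imp_bounded compact_continuous_image compact_Icc)
  then have M: "\<bar>d (k+1) y\<bar> \<le> (SUP y\<in>{a..b}. \<bar>d (k+1) y\<bar>)" if "y \<in> {a..b}" for y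
    using that by (rule cSUP_upper2) simp
  show "\<bar>d 1 x - PL a b \<gamma> k d x\<bar> \<le> 3 * (1/\<gamma>)^k * (SUP y\<in>{a..b}. \<bar>d (k+1) y\<bar>)"
    by (rule PL_error_bound[OF assms(1) \<gamma> assms(2) cn M x])
  show "\<bar>d 1 x - PR a b \<gamma> k d x\<bar> \<le> 3 * (1/\<gamma>)^k * (SUP y\<in>{a..b}. \<bar>d (k+1) y\<bar>)"
    by (rule PR_error_bound[OF assms(1) \<gamma> assms(2) cn M x])
qed simp

end
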